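(* Let $\mathcal L$ be a positively sloped line in $\mathbb{R}^n$ with parametrization $\iota_{\mathcal L}:\mathbb{R}\to\mathbb{R}^n$, and let $M$ be an $n$-parameter persistence module with a free resolution $F_\bullet\to M$. Then the $1$-parameter module $M^{\mathcal L}=M\circ\iota_{\mathcal L}$ has a free resolution $F^{\mathcal L}_\bullet$ whose generators are in bijection with those of $F_\bullet$: a generator $\vec a$ of $F_i$ corresponds to a generator $\vec a^{\mathcal L}$ of $F^{\mathcal L}_i$ of grade $\iota_{\mathcal L}^{-1}(\mathrm{push}_{\mathcal L}(\mathrm{gr}(\vec a)))$.
   Context: An $n$-parameter persistence module is a functor $(\mathbb{R}^n,\le)\to\mathbf{Vect}$, equivalently an $\mathbb{R}^n$-graded module over the monoid ring of $([0,\infty)^n,+)$; free modules are direct sums of shifted copies of this ring. A line $\mathcal L=\{t\vec m+\vec c\}$ is positively sloped if all $m_i>0$; $\iota_{\mathcal L}$ is its order-preserving parametrization, isometric for $\|\cdot\|_\infty$. $\mathrm{push}_{\mathcal L}(\vec p)=\min\{\vec a\in\mathcal L:\vec a\ge\vec p\}$ (coordinatewise order). *)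

theory Defs
  imports "HOL-Analysis.Analysis" "HOL-Library.Function_Algebras"
begin

definition pos_sloped_line :: "(real^'n) set \<Rightarrow> bool" where
  "pos_sloped_line L \<longleftrightarrow>
     (\<exists>m c. (\<forall>i. m $ i > 0) \<and> L = {t *\<^sub>R m + c | t. True})"

definition line_param :: "(real^'n) set \<Rightarrow> (real \<Rightarrow> real^'n) \<Rightarrow> bool" where
  "line_param L \<iota> \<longleftrightarrow> range \<iota> = L \<and> (\<forall>s t. s \<le> t \<longrightarrow> \<iota> s \<le> \<iota> t)
     \<and> (\<forall>s t. infnorm (\<iota> s - \<iota> t) = \<bar>s - t\<bar>)"

definition push :: "(real^'n) set \<Rightarrow> real^'n \<Rightarrow> real^'n" where
  "push L p = (LEAST a. a \<in> L \<and> p \<le> a)"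

text \<open>Spaces are subspaces V a of an ambient 'k-vector space 'v (scalar multiplication sc).\<close>

definition subsp :: "('k::field \<Rightarrow> 'v::ab_group_add \<Rightarrow> 'v) \<Rightarrow> 'v set \<Rightarrow> bool" where
  "subsp sc S \<longleftrightarrow> 0 \<in> S \<and> (\<forall>x\<in>S. \<forall>y\<in>S. x + y \<in> S) \<and> (\<forall>c. \<forall>x\<in>S. sc c x \<in> S)"

definition lin_on :: "('k::field \<Rightarrow> 'v::ab_group_add \<Rightarrow> 'v) \<Rightarrow> ('k \<Rightarrow> 'w::ab_group_add \<Rightarrow> 'w)
    \<Rightarrow> 'v set \<Rightarrow> ('v \<Rightarrow> 'w) \<Rightarrow> bool" where
  "lin_on s t S h \<longleftrightarrow> (\<forall>x\<in>S. \<forall>y\<in>S. h (x + y) = h x + h y) \<and> (\<forall>c. \<forall>x\<in>S. h (s c x) = t c (h x))"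

definition pmod :: "('k::field \<Rightarrow> 'v::ab_group_add \<Rightarrow> 'v) \<Rightarrow> ('i::order \<Rightarrow> 'v set)
    \<Rightarrow> ('i \<Rightarrow> 'i \<Rightarrow> 'v \<Rightarrow> 'v) \<Rightarrow> bool" where
  "pmod sc V f \<longleftrightarrow> vector_space sc \<and> (\<forall>a. subsp sc (V a))
     \<and> (\<forall>a b. a \<le> b \<longrightarrow> lin_on sc sc (V a) (f a b) \<and> f a b ` V a \<subseteq> V b)
     \<and> (\<forall>a. \<forall>x\<in>V a. f a a x = x)
     \<and> (\<forall>a b c. a \<le> b \<longrightarrow> b \<le> c \<longrightarrow> (\<forall>x\<in>V a. f b c (f a b x) = f a c x))"

definition pmor :: "('k::field \<Rightarrow> 'v::ab_group_add \<Rightarrow> 'v) \<Rightarrow> ('i::order \<Rightarrow> 'v set) \<Rightarrow> ('i \<Rightarrow> 'i \<Rightarrow> 'v \<Rightarrow> 'v)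
    \<Rightarrow> ('k \<Rightarrow> 'w::ab_group_add \<Rightarrow> 'w) \<Rightarrow> ('i \<Rightarrow> 'w set) \<Rightarrow> ('i \<Rightarrow> 'i \<Rightarrow> 'w \<Rightarrow> 'w)
    \<Rightarrow> ('i \<Rightarrow> 'v \<Rightarrow> 'w) \<Rightarrow> bool" where
  "pmor s V f t W g \<phi> \<longleftrightarrow> (\<forall>a. lin_on s t (V a) (\<phi> a) \<and> \<phi> a ` V a \<subseteq> W a)
     \<and> (\<forall>a b. a \<le> b \<longrightarrow> (\<forall>x\<in>V a. g a b (\<phi> a x) = \<phi> b (f a b x)))"

text \<open>The free module with generator set G and grades gr, i.e. the direct sum over g \<in> G of
  the monoid ring shifted by gr g: its space at a consists of the finitely supported
  'k-combinations of the generators g with gr g \<le> a; structure maps are inclusions.\<close>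

definition fsc :: "'k::field \<Rightarrow> ('g \<Rightarrow> 'k) \<Rightarrow> ('g \<Rightarrow> 'k)" where
  "fsc c x = (\<lambda>g. c * x g)"

definition free_sp :: "'g set \<Rightarrow> ('g \<Rightarrow> 'i::order) \<Rightarrow> 'i \<Rightarrow> ('g \<Rightarrow> 'k::field) set" where
  "free_sp G gr a = {x. finite {g. x g \<noteq> 0} \<and> (\<forall>g. x g \<noteq> 0 \<longrightarrow> g \<in> G \<and> gr g \<le> a)}"

definition free_map :: "'i \<Rightarrow> 'i \<Rightarrow> ('g \<Rightarrow> 'k) \<Rightarrow> ('g \<Rightarrow> 'k)" where
  "free_map a b x = x"

text \<open>A free resolution  ... \<rightarrow> F_2 \<rightarrow> F_1 \<rightarrow> F_0 \<rightarrow> M \<rightarrow> 0 :  F_i has generators G i with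
  grades gr i; d i : F_(i+1) \<rightarrow> F_i and e : F_0 \<rightarrow> M are morphisms, and the sequence is exact.\<close>
definition free_resolution :: "('k::field \<Rightarrow> 'v::ab_group_add \<Rightarrow> 'v) \<Rightarrow> ('i::order \<Rightarrow> 'v set)
    \<Rightarrow> ('i \<Rightarrow> 'i \<Rightarrow> 'v \<Rightarrow> 'v) \<Rightarrow> (nat \<Rightarrow> 'g set) \<Rightarrow> (nat \<Rightarrow> 'g \<Rightarrow> 'i)
    \<Rightarrow> (nat \<Rightarrow> 'i \<Rightarrow> ('g \<Rightarrow> 'k) \<Rightarrow> ('g \<Rightarrow> 'k)) \<Rightarrow> ('i \<Rightarrow> ('g \<Rightarrow> 'k) \<Rightarrow> 'v) \<Rightarrow> bool" where
  "free_resolution sc V f G gr d e \<longleftrightarrow>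
     pmor fsc (free_sp (G 0) (gr 0)) free_map sc V f e
   \<and> (\<forall>i. pmor fsc (free_sp (G (Suc i)) (gr (Suc i))) free_map
              fsc (free_sp (G i) (gr i)) free_map (d i))
   \<and> (\<forall>a. e a ` free_sp (G 0) (gr 0) a = V a)
   \<and> (\<forall>a. {x \<in> free_sp (G 0) (gr 0) a. e a x = 0} = d 0 a ` free_sp (G 1) (gr 1) a)
   \<and> (\<forall>i a. {x \<in> free_sp (G (Suc i)) (gr (Suc i)) a. d i a x = 0}
            = d (Suc i) a ` free_sp (G (Suc (Suc i))) (gr (Suc (Suc i))) a)"

end

theory Submission
  imports Defs
begin

text \<open>Along a positively sloped line, p \<le> \<iota> t holds iff t lies above the parameter of push L p;
  that is, the monotone map \<iota> has the lower adjoint inv \<iota> \<circ> push L. Hence restricting the free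
  module with grades gr along \<iota> gives the free module on the same generators with grades
  inv \<iota> \<circ> push L \<circ> gr, and since exactness is checked pointwise, restricting a free
  resolution of M along \<iota> gives a free resolution of M \<circ> \<iota>.\<close>

lemma pos_sloped_line_least_above:
  fixes L :: "(real^'n) set"
  assumes "pos_sloped_line L"
  obtains a where "a \<in> L" "p \<le> a" "\<And>b. b \<in> L \<Longrightarrow> p \<le> b \<Longrightarrow> a \<le> b"
proof -
  obtain m c where m: "\<And>i. m $ i > 0" and L: "L = {t *\<^sub>R m + c | t. True}"
    using assms unfolding pos_sloped_line_def by blast
  \<comment> \<open>the least parameter at which the line lies above p\<close>
  define T where "T = Max (range (\<lambda>i. (p$i - c$i) / m$i))"
  have le_point_iff: "p \<le> t *\<^sub>R m + c \<longleftrightarrow> T \<le> t" for t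
  proof -
    have "p \<le> t *\<^sub>R m + c \<longleftrightarrow> (\<forall>i. (p$i - c$i) / m$i \<le> t)"
      using m by (simp add: less_eq_vec_def pos_divide_le_eq algebra_simps)
    also have "\<dots> \<longleftrightarrow> T \<le> t"
      unfolding T_def by (subst Max_le_iff) auto
    finally show ?thesis .
  qed
  have mono_point: "s \<le> t \<Longrightarrow> s *\<^sub>R m + c \<le> t *\<^sub>R m + c" for s t
    using m by (simp add: less_eq_vec_def less_imp_le mult_right_mono)
  show thesis
  proof
    show "T *\<^sub>R m + c \<in> L" "p \<le> T *\<^sub>R m + c"
      using L le_point_iff by auto
    show "T *\<^sub>R m + c \<le> b" if "b \<in> L" "p \<le> b" for b
      using that L le_point_iff mono_point by auto
  qed
qed

lemma push_least_above:
  fixes L :: "(real^'n) set"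
  assumes "pos_sloped_line L"
  shows "push L p \<in> L" "p \<le> push L p" "\<And>b. b \<in> L \<Longrightarrow> p \<le> b \<Longrightarrow> push L p \<le> b"
proof -
  obtain a where a: "a \<in> L" "p \<le> a" "\<And>b. b \<in> L \<Longrightarrow> p \<le> b \<Longrightarrow> a \<le> b"
    using pos_sloped_line_least_above[OF assms, of p] by blast
  have "push L p = a"
    unfolding push_def by (rule Least_equality) (use a in auto)
  then show "push L p \<in> L" "p \<le> push L p" "\<And>b. b \<in> L \<Longrightarrow> p \<le> b \<Longrightarrow> push L p \<le> b"
    using a by auto
qed

lemma line_param_inj:
  assumes "line_param L \<iota>"
  shows "inj \<iota>"
proof (rule injI)
  fix s t
  assume "\<iota> s = \<iota> t"
  then have "\<bar>s - t\<bar> = 0"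
    using assms unfolding line_param_def by (metis infnorm_0 right_minus_eq)
  then show "s = t" by simp
qed

lemma line_param_le_iff:
  assumes "line_param L \<iota>"
  shows "\<iota> s \<le> \<iota> t \<longleftrightarrow> s \<le> t"
proof
  have mono: "\<And>s t. s \<le> t \<Longrightarrow> \<iota> s \<le> \<iota> t"
    using assms unfolding line_param_def by auto
  assume "\<iota> s \<le> \<iota> t"
  show "s \<le> t"
  proof (rule ccontr)
    assume "\<not> s \<le> t"
    then have "\<iota> s = \<iota> t" and "s \<noteq> t"
      using mono \<open>\<iota> s \<le> \<iota> t\<close> by (auto intro: order_antisym)
    then show False
      using line_param_inj[OF assms] by (auto dest: injD)
  qed
qed (use assms in \<open>auto simp: line_param_def\<close>)

lemma le_line_param_iff_push:
  fixes L :: "(real^'n) set"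
  assumes "pos_sloped_line L" and "line_param L \<iota>"
  shows "p \<le> \<iota> t \<longleftrightarrow> inv \<iota> (push L p) \<le> t"
proof -
  have range: "range \<iota> = L"
    using assms(2) unfolding line_param_def by auto
  obtain u where u: "push L p = \<iota> u"
    using push_least_above(1)[OF assms(1)] range by blast
  then have "inv \<iota> (push L p) = u"
    using line_param_inj[OF assms(2)] by simp
  moreover have "p \<le> \<iota> t \<longleftrightarrow> \<iota> u \<le> \<iota> t"
  proof
    assume "p \<le> \<iota> t"
    moreover have "\<iota> t \<in> L"
      using range by blast
    ultimately show "\<iota> u \<le> \<iota> t"
      using push_least_above(3)[OF assms(1)] u by metis
  next
    assume "\<iota> u \<le> \<iota> t"
    moreover have "p \<le> \<iota> u"
      using push_least_above(2)[OF assms(1), of p] u by simp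
    ultimately show "p \<le> \<iota> t"
      by simp
  qed
  ultimately show ?thesis
    using line_param_le_iff[OF assms(2)] by simp
qed

lemma free_sp_pullback:
  assumes "\<And>g t. gr g \<le> h t \<longleftrightarrow> gr' g \<le> t"
  shows "free_sp G gr' = (\<lambda>t. free_sp G gr (h t))"
  unfolding free_sp_def using assms by simp

lemma pmor_pullback:
  assumes "pmor s V f t W g \<phi>" and "mono h"
  shows "pmor s (\<lambda>a. V (h a)) (\<lambda>a b. f (h a) (h b)) t (\<lambda>a. W (h a)) (\<lambda>a b. g (h a) (h b))
           (\<lambda>a. \<phi> (h a))"
  using assms unfolding pmor_def mono_def by simp

lemma free_resolution_pullback:
  fixes h :: "'j::order \<Rightarrow> 'i::order"
  assumes res: "free_resolution sc V f G gr d e" and "mono h"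
    and adj: "\<And>i g t. gr i g \<le> h t \<longleftrightarrow> gr' i g \<le> t"
  shows "free_resolution sc (\<lambda>t. V (h t)) (\<lambda>s t. f (h s) (h t)) G gr'
           (\<lambda>i t. d i (h t)) (\<lambda>t. e (h t))"
proof -
  have sp: "free_sp (G i) (gr' i) = (\<lambda>t. free_sp (G i) (gr i) (h t))" for i
    by (rule free_sp_pullback) (rule adj)
  have map: "free_map (h s) (h t) = free_map s t" for s t
    unfolding free_map_def ..
  have e: "pmor fsc (free_sp (G 0) (gr 0)) free_map sc V f e"
    and d: "\<And>i. pmor fsc (free_sp (G (Suc i)) (gr (Suc i))) free_map
                      fsc (free_sp (G i) (gr i)) free_map (d i)"
    and exact: "\<And>a. e a ` free_sp (G 0) (gr 0) a = V a"
      "\<And>a. {x \<in> free_sp (G 0) (gr 0) a. e a x = 0} = d 0 a ` free_sp (G 1) (gr 1) a"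
      "\<And>i a. {x \<in> free_sp (G (Suc i)) (gr (Suc i)) a. d i a x = 0}
                = d (Suc i) a ` free_sp (G (Suc (Suc i))) (gr (Suc (Suc i))) a"
    using res unfolding free_resolution_def by auto
  show ?thesis
    unfolding free_resolution_def sp
    using pmor_pullback[OF e \<open>mono h\<close>] pmor_pullback[OF d \<open>mono h\<close>] exact
    by (simp add: map)
qed

theorem mainTheorem13:
  fixes L :: "(real^'n) set" and \<iota> :: "real \<Rightarrow> real^'n"
    and sc :: "'k::field \<Rightarrow> 'v::ab_group_add \<Rightarrow> 'v"
    and V :: "real^'n \<Rightarrow> 'v set" and f :: "real^'n \<Rightarrow> real^'n \<Rightarrow> 'v \<Rightarrow> 'v"
    and G :: "nat \<Rightarrow> 'g set" and gr :: "nat \<Rightarrow> 'g \<Rightarrow> real^'n"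
    and d :: "nat \<Rightarrow> real^'n \<Rightarrow> ('g \<Rightarrow> 'k) \<Rightarrow> ('g \<Rightarrow> 'k)"
    and e :: "real^'n \<Rightarrow> ('g \<Rightarrow> 'k) \<Rightarrow> 'v"
  assumes "pos_sloped_line L" and "line_param L \<iota>"
    and "pmod sc V f"
    and "free_resolution sc V f G gr d e"
  shows "\<exists>(G' :: nat \<Rightarrow> 'g set) (gr' :: nat \<Rightarrow> 'g \<Rightarrow> real)
            (d' :: nat \<Rightarrow> real \<Rightarrow> ('g \<Rightarrow> 'k) \<Rightarrow> ('g \<Rightarrow> 'k)) (e' :: real \<Rightarrow> ('g \<Rightarrow> 'k) \<Rightarrow> 'v).
           free_resolution sc (\<lambda>t. V (\<iota> t)) (\<lambda>s t. f (\<iota> s) (\<iota> t)) G' gr' d' e'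
         \<and> (\<forall>i. \<exists>\<phi>. bij_betw \<phi> (G i) (G' i)
                 \<and> (\<forall>g\<in>G i. gr' i (\<phi> g) = inv \<iota> (push L (gr i g))))"
proof -
  define gr' where "gr' i g = inv \<iota> (push L (gr i g))" for i g
  have "mono \<iota>"
    using line_param_le_iff[OF assms(2)] by (simp add: mono_def)
  moreover have "gr i g \<le> \<iota> t \<longleftrightarrow> gr' i g \<le> t" for i g t
    unfolding gr'_def by (rule le_line_param_iff_push[OF assms(1,2)])
  ultimately have res: "free_resolution sc (\<lambda>t. V (\<iota> t)) (\<lambda>s t. f (\<iota> s) (\<iota> t)) G gr'
                          (\<lambda>i t. d i (\<iota> t)) (\<lambda>t. e (\<iota> t))"
    using free_resolution_pullback[OF assms(4)] by blast
  show ?thesis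
  proof (intro exI conjI)
    show "free_resolution sc (\<lambda>t. V (\<iota> t)) (\<lambda>s t. f (\<iota> s) (\<iota> t)) G gr'
            (\<lambda>i t. d i (\<iota> t)) (\<lambda>t. e (\<iota> t))"
      by (rule res)
    show "\<forall>i. \<exists>\<phi>. bij_betw \<phi> (G i) (G i) \<and> (\<forall>g\<in>G i. gr' i (\<phi> g) = inv \<iota> (push L (gr i g)))"
      unfolding gr'_def by (auto intro: exI[of _ id])
  qed
qed

end
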